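(* Let $G$ be a finite abelian group and $S\subseteq G$ an interval of $G$. Then $\mathrm{sh}_G(S)\le 2$.
   Context: Shape parameter: for a finite abelian group $G$ (written multiplicatively), $G^\vee=\mathrm{Hom}(G,\mathbb C^* )$ with trivial character $\chi_0$. For $f=\sum_{g\in G}c_g g\in\mathbb C[G]$ and $\chi\in G^\vee$ put $f_\chi=\sum_g c_g\chi(g^{-1})$. For $S\subseteq G$ let $\mathbb C[S]=\{\sum_{s\in S}c_ss\}\subseteq\mathbb C[G]$. The shape parameter is $\mathrm{sh}_G(S)=\frac{\#S}{\#G}\inf\left\{\frac{\sum_{\chi\in G^\vee}|f_\chi|}{|f_{\chi_0}|}: f\in\mathbb C[S],\ f_{\chi_0}\neq0\right\}$. Intervals: an interval of $\mathbb Z$ is a nonempty set $[n,m]\cap\mathbb Z$ with $n,m\in\mathbb R$. A standard interval of $\mathbb Z/n\mathbb Z$ is the image of an interval of $\mathbb Z$. In a finite abelian group $G$, a full interval is a set $\pi^{-1}(T)$ where $\pi:G\to\mathbb Z/n\mathbb Z$ is a surjective homomorphism ($n\ge1$) and $T$ a standard interval of $\mathbb Z/n\mathbb Z$; an interval of $G$ is a full interval of some subgroup of $G$. *)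

theory Defs
  imports "HOL-Analysis.Analysis" "HOL-Algebra.Algebra"
begin

definition characters :: "('a, 'b) monoid_scheme \<Rightarrow> ('a \<Rightarrow> complex) set" where
  "characters G = {\<psi>. \<psi> \<in> extensional (carrier G) \<and>
      (\<forall>x\<in>carrier G. \<psi> x \<noteq> 0) \<and>
      (\<forall>x\<in>carrier G. \<forall>y\<in>carrier G. \<psi> (x \<otimes>\<^bsub>G\<^esub> y) = \<psi> x * \<psi> y)}"

definition trivial_character :: "('a, 'b) monoid_scheme \<Rightarrow> 'a \<Rightarrow> complex" where
  "trivial_character G = (\<lambda>x\<in>carrier G. 1)"

text \<open>Elements of C[G] are coefficient functions c (c g = coefficient of g).
  Fourier coefficient f_chi = sum_g c_g chi(g^{-1}).\<close>
definition fourier_coeff :: "('a, 'b) monoid_scheme \<Rightarrow> ('a \<Rightarrow> complex) \<Rightarrow> ('a \<Rightarrow> complex) \<Rightarrow> complex" where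
  "fourier_coeff G c \<psi> = (\<Sum>g\<in>carrier G. c g * \<psi> (inv\<^bsub>G\<^esub> g))"

definition shape_param :: "('a, 'b) monoid_scheme \<Rightarrow> 'a set \<Rightarrow> real" where
  "shape_param G S = real (card S) / real (card (carrier G)) *
     Inf {(\<Sum>\<psi>\<in>characters G. cmod (fourier_coeff G c \<psi>)) / cmod (fourier_coeff G c (trivial_character G)) | c.
           (\<forall>g. g \<notin> S \<longrightarrow> c g = 0) \<and> fourier_coeff G c (trivial_character G) \<noteq> 0}"

definition Z_interval :: "int set \<Rightarrow> bool" where
  "Z_interval J \<longleftrightarrow> J \<noteq> {} \<and> (\<exists>(a::real) (b::real). J = {k :: int. a \<le> of_int k \<and> of_int k \<le> b})"

text \<open>Standard interval of Z/nZ (represented by integer_mod_group n, carrier {0..<n}).\<close>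
definition ZnZ_std_interval :: "nat \<Rightarrow> int set \<Rightarrow> bool" where
  "ZnZ_std_interval n T \<longleftrightarrow> (\<exists>J. Z_interval J \<and> T = (\<lambda>k. k mod int n) ` J)"

definition full_interval :: "('a, 'b) monoid_scheme \<Rightarrow> 'a set \<Rightarrow> bool" where
  "full_interval H S \<longleftrightarrow> (\<exists>(n::nat) \<pi> T. n \<ge> 1 \<and>
       \<pi> \<in> hom H (integer_mod_group n) \<and> \<pi> ` carrier H = carrier (integer_mod_group n) \<and>
       ZnZ_std_interval n T \<and> S = {x \<in> carrier H. \<pi> x \<in> T})"

definition group_interval :: "('a, 'b) monoid_scheme \<Rightarrow> 'a set \<Rightarrow> bool" where
  "group_interval G S \<longleftrightarrow> (\<exists>H. subgroup H G \<and> full_interval (G\<lparr>carrier := H\<rparr>) S)"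

end

theory Submission
  imports Defs
begin

(*
  The proof follows the paper: an interval S of G contains a "difference set"
  t A A^-1 with |S| <= 2|A|, and any such set bounds the shape parameter.

  For A \<subseteq> G and t \<in> G let c count the representations
      g = t x y^-1 with x, y \<in> A.  Then c is supported on t A A^-1, its Fourier
      coefficient at a character \<psi> has modulus |\<Sum>_{x\<in>A} \<psi>(x)|^2 and at the trivial
      character equals |A|^2.  Bessel's inequality for the (orthonormal, up to the
      factor |G|) characters bounds \<Sum>_\<psi> |\<Sum>_A \<psi>|^2 by |G| |A|, so
      sh_G(S) <= |S| / |A| whenever t A A^-1 \<subseteq> S.
  (2) Combinatorial half.  If S = \<pi>^-1 of the residues of [p, q] under a surjection
      \<pi> : H -> Z/nZ, take A = \<pi>^-1 of the residues of [0, d] with d = (q - p) div 2: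
      a suitable translate of A A^-1 lies in S, and S is covered by two translates of A.
*)


subsection \<open>Bounding the shape parameter by one admissible function\<close>

lemma shape_param_le_witness:
  assumes supp: "\<And>g. g \<notin> S \<Longrightarrow> c g = 0"
    and nz: "fourier_coeff G c (trivial_character G) \<noteq> 0"
  shows "shape_param G S \<le> real (card S) / real (card (carrier G)) *
           ((\<Sum>\<psi>\<in>characters G. cmod (fourier_coeff G c \<psi>))
              / cmod (fourier_coeff G c (trivial_character G)))"
proof -
  define Q where "Q = {(\<Sum>\<psi>\<in>characters G. cmod (fourier_coeff G c \<psi>))
                         / cmod (fourier_coeff G c (trivial_character G)) | c.
           (\<forall>g. g \<notin> S \<longrightarrow> c g = 0) \<and> fourier_coeff G c (trivial_character G) \<noteq> 0}"
  have "bdd_below Q"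
    unfolding Q_def by (rule bdd_belowI[of _ 0]) (auto intro!: divide_nonneg_nonneg sum_nonneg)
  then have inf: "Inf Q \<le> (\<Sum>\<psi>\<in>characters G. cmod (fourier_coeff G c \<psi>))
                              / cmod (fourier_coeff G c (trivial_character G))"
    by (rule cInf_lower[rotated]) (use supp nz in \<open>auto simp: Q_def\<close>)
  have "shape_param G S = real (card S) / real (card (carrier G)) * Inf Q"
    by (simp add: shape_param_def Q_def)
  also have "\<dots> \<le> real (card S) / real (card (carrier G)) *
           ((\<Sum>\<psi>\<in>characters G. cmod (fourier_coeff G c \<psi>))
              / cmod (fourier_coeff G c (trivial_character G)))"
    by (rule mult_left_mono[OF inf]) simp
  finally show ?thesis .
qed

text \<open>The element \<Sum>_{p \<in> P} f(p) of the group algebra: its coefficient at g is the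
  number of p \<in> P with f p = g.\<close>
definition fibre_count :: "('p \<Rightarrow> 'a) \<Rightarrow> 'p set \<Rightarrow> 'a \<Rightarrow> complex" where
  "fibre_count f P g = of_nat (card {p \<in> P. f p = g})"

lemma fourier_coeff_fibre_count:
  assumes fin: "finite (carrier G)" and P: "finite P" and f: "f ` P \<subseteq> carrier G"
  shows "fourier_coeff G (fibre_count f P) \<psi> = (\<Sum>p\<in>P. \<psi> (inv\<^bsub>G\<^esub> f p))"
proof -
  have "fibre_count f P g * \<psi> (inv\<^bsub>G\<^esub> g) = (\<Sum>p\<in>P. if f p = g then \<psi> (inv\<^bsub>G\<^esub> g) else 0)" for g
    using P by (simp add: fibre_count_def sum.inter_filter[symmetric])
  then have "fourier_coeff G (fibre_count f P) \<psi>
      = (\<Sum>p\<in>P. \<Sum>g\<in>carrier G. if f p = g then \<psi> (inv\<^bsub>G\<^esub> g) else 0)"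
    unfolding fourier_coeff_def by (simp add: sum.swap[of _ P])
  also have "\<dots> = (\<Sum>p\<in>P. \<psi> (inv\<^bsub>G\<^esub> f p))"
    using fin f by (intro sum.cong) auto
  finally show ?thesis .
qed

lemma sum_times_cnj:
  fixes z :: "'i \<Rightarrow> complex"
  shows "(\<Sum>i\<in>I. z i * cnj (z i)) = of_real (\<Sum>i\<in>I. (norm (z i))\<^sup>2)"
  unfolding of_real_sum by (rule sum.cong[OF refl]) (rule complex_norm_square[symmetric])


subsection \<open>Characters of a finite group\<close>

context group
begin

lemma char_mult:
  assumes "\<xi> \<in> characters G" "x \<in> carrier G" "y \<in> carrier G"
  shows "\<xi> (x \<otimes> y) = \<xi> x * \<xi> y"
  using assms by (simp add: characters_def)

lemma char_nonzero:
  assumes "\<xi> \<in> characters G" "x \<in> carrier G"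
  shows "\<xi> x \<noteq> 0"
  using assms by (simp add: characters_def)

lemma trivial_character_in_characters: "trivial_character G \<in> characters G"
  by (simp add: characters_def trivial_character_def)

lemma char_one:
  assumes "\<xi> \<in> characters G"
  shows "\<xi> \<one> = 1"
proof -
  have "\<xi> \<one> * \<xi> \<one> = \<xi> \<one> * 1" using char_mult[OF assms, of \<one> \<one>] by simp
  then show ?thesis using char_nonzero[OF assms, of \<one>] by (metis mult_left_cancel one_closed)
qed

lemma char_pow:
  assumes "\<xi> \<in> characters G" "g \<in> carrier G"
  shows "\<xi> (g [^] (k::nat)) = \<xi> g ^ k"
proof (induction k)
  case 0
  then show ?case using char_one[OF assms(1)] by simp
next
  case (Suc k)
  have "\<xi> (g [^] Suc k) = \<xi> (g [^] k) * \<xi> g"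
    using char_mult[OF assms(1) nat_pow_closed[OF assms(2)] assms(2)] by simp
  then show ?case using Suc by simp
qed

text \<open>Character values are roots of unity (of order dividing |G|), hence of modulus 1.\<close>
lemma char_norm:
  assumes "\<xi> \<in> characters G" "finite (carrier G)" "g \<in> carrier G"
  shows "norm (\<xi> g) = 1"
proof -
  have "\<xi> g ^ order G = 1"
    using char_pow[OF assms(1,3)] char_one[OF assms(1)] pow_order_eq_1[OF assms(3)] by metis
  moreover have "order G \<noteq> 0" using assms(2,3) by (auto simp: order_def)
  ultimately show ?thesis by (metis power_eq_1_iff)
qed

lemma char_times_cnj:
  assumes "\<xi> \<in> characters G" "finite (carrier G)" "g \<in> carrier G"
  shows "\<xi> g * cnj (\<xi> g) = 1"
proof -
  have "\<xi> g * cnj (\<xi> g) = of_real ((norm (\<xi> g))\<^sup>2)" by (rule complex_norm_square[symmetric])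
  then show ?thesis using char_norm[OF assms] by simp
qed

lemma char_inv:
  assumes "\<xi> \<in> characters G" "finite (carrier G)" "g \<in> carrier G"
  shows "\<xi> (inv g) = cnj (\<xi> g)"
proof -
  have "\<xi> g * \<xi> (inv g) = \<xi> (g \<otimes> inv g)"
    using char_mult[OF assms(1) assms(3) inv_closed[OF assms(3)]] by simp
  also have "\<dots> = \<xi> g * cnj (\<xi> g)"
    using char_one[OF assms(1)] char_times_cnj[OF assms] assms(3) by simp
  finally show ?thesis using char_nonzero[OF assms(1,3)] by simp
qed

text \<open>A multiplicative function that is not identically 1 sums to zero over the group,
  since translation by a point u with h u \<noteq> 1 permutes the summands.\<close>
lemma sum_multiplicative_eq_0:
  fixes h :: "'a \<Rightarrow> complex"
  assumes mult: "\<And>x y. x \<in> carrier G \<Longrightarrow> y \<in> carrier G \<Longrightarrow> h (x \<otimes> y) = h x * h y"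
    and u: "u \<in> carrier G" "h u \<noteq> 1"
  shows "(\<Sum>g\<in>carrier G. h g) = 0"
proof -
  have "(\<Sum>g\<in>carrier G. h g) = (\<Sum>g\<in>carrier G. h (u \<otimes> g))"
    by (rule sum.reindex_bij_betw[symmetric])
       (simp add: bij_betw_def inj_on_cmult surj_const_mult u(1))
  also have "\<dots> = h u * (\<Sum>g\<in>carrier G. h g)"
    unfolding sum_distrib_left by (rule sum.cong) (simp_all add: mult u(1))
  finally have "(1 - h u) * (\<Sum>g\<in>carrier G. h g) = 0" by (simp add: algebra_simps)
  then show ?thesis using u(2) by simp
qed

lemma char_orthogonality:
  assumes fin: "finite (carrier G)" and \<xi>: "\<xi> \<in> characters G" and \<psi>: "\<psi> \<in> characters G"
  shows "(\<Sum>g\<in>carrier G. \<xi> g * cnj (\<psi> g)) = (if \<xi> = \<psi> then of_nat (card (carrier G)) else 0)"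
proof (cases "\<xi> = \<psi>")
  case True
  have "(\<Sum>g\<in>carrier G. \<psi> g * cnj (\<psi> g)) = (\<Sum>g\<in>carrier G. 1)"
    using char_times_cnj[OF \<psi> fin] by (intro sum.cong) simp_all
  then show ?thesis using True by simp
next
  case False
  have "\<xi> \<in> extensional (carrier G)" "\<psi> \<in> extensional (carrier G)"
    using \<xi> \<psi> by (simp_all add: characters_def)
  then obtain u where u: "u \<in> carrier G" "\<xi> u \<noteq> \<psi> u"
    using False extensionalityI by blast
  have "\<xi> u * cnj (\<psi> u) \<noteq> 1"
  proof
    assume "\<xi> u * cnj (\<psi> u) = 1"
    then have "\<xi> u * (cnj (\<psi> u) * \<psi> u) = \<psi> u" by (metis mult.assoc mult_1)
    then show False using u char_times_cnj[OF \<psi> fin u(1)] by (simp add: mult.commute)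
  qed
  moreover have "\<xi> (x \<otimes> y) * cnj (\<psi> (x \<otimes> y)) = \<xi> x * cnj (\<psi> x) * (\<xi> y * cnj (\<psi> y))"
    if "x \<in> carrier G" "y \<in> carrier G" for x y
    using char_mult[OF \<xi> that] char_mult[OF \<psi> that] by (simp add: mult_ac)
  ultimately have "(\<Sum>g\<in>carrier G. \<xi> g * cnj (\<psi> g)) = 0"
    by (intro sum_multiplicative_eq_0[OF _ u(1)])
  with False show ?thesis by simp
qed


subsection \<open>Bessel's inequality for characters\<close>

lemma char_combination_parseval:
  fixes a :: "('a \<Rightarrow> complex) \<Rightarrow> complex"
  assumes fin: "finite (carrier G)" and Xs: "Xs \<subseteq> characters G" "finite Xs"
  shows "(\<Sum>g\<in>carrier G. (\<Sum>\<xi>\<in>Xs. a \<xi> * \<xi> g) * cnj (\<Sum>\<xi>\<in>Xs. a \<xi> * \<xi> g))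
           = of_nat (card (carrier G)) * (\<Sum>\<xi>\<in>Xs. a \<xi> * cnj (a \<xi>))"
    (is "(\<Sum>g\<in>carrier G. ?\<Phi> g * cnj (?\<Phi> g)) = _")
proof -
  have "(\<Sum>g\<in>carrier G. ?\<Phi> g * cnj (?\<Phi> g))
      = (\<Sum>g\<in>carrier G. \<Sum>\<xi>\<in>Xs. \<Sum>\<psi>\<in>Xs. a \<xi> * cnj (a \<psi>) * (\<xi> g * cnj (\<psi> g)))"
    by (simp add: sum_product mult_ac)
  also have "\<dots> = (\<Sum>\<xi>\<in>Xs. \<Sum>\<psi>\<in>Xs. \<Sum>g\<in>carrier G. a \<xi> * cnj (a \<psi>) * (\<xi> g * cnj (\<psi> g)))"
    by (subst sum.swap) (rule sum.cong[OF refl], rule sum.swap)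
  also have "\<dots> = (\<Sum>\<xi>\<in>Xs. \<Sum>\<psi>\<in>Xs. a \<xi> * cnj (a \<psi>) * (\<Sum>g\<in>carrier G. \<xi> g * cnj (\<psi> g)))"
    by (simp add: sum_distrib_left)
  also have "\<dots> = (\<Sum>\<xi>\<in>Xs. a \<xi> * cnj (a \<xi>) * of_nat (card (carrier G)))"
  proof (rule sum.cong[OF refl])
    fix \<xi> assume "\<xi> \<in> Xs"
    have "(\<Sum>\<psi>\<in>Xs. a \<xi> * cnj (a \<psi>) * (\<Sum>g\<in>carrier G. \<xi> g * cnj (\<psi> g)))
             = (\<Sum>\<psi>\<in>Xs. if \<xi> = \<psi> then a \<xi> * cnj (a \<psi>) * of_nat (card (carrier G)) else 0)"
    proof (rule sum.cong[OF refl])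
      fix \<psi> assume "\<psi> \<in> Xs"
      then have "\<xi> \<in> characters G" "\<psi> \<in> characters G" using \<open>\<xi> \<in> Xs\<close> Xs(1) by auto
      then show "a \<xi> * cnj (a \<psi>) * (\<Sum>g\<in>carrier G. \<xi> g * cnj (\<psi> g))
               = (if \<xi> = \<psi> then a \<xi> * cnj (a \<psi>) * of_nat (card (carrier G)) else 0)"
        by (simp add: char_orthogonality[OF fin])
    qed
    then show "(\<Sum>\<psi>\<in>Xs. a \<xi> * cnj (a \<psi>) * (\<Sum>g\<in>carrier G. \<xi> g * cnj (\<psi> g)))
             = a \<xi> * cnj (a \<xi>) * of_nat (card (carrier G))"
      using \<open>\<xi> \<in> Xs\<close> Xs(2) by simp
  qed
  finally show ?thesis by (simp add: sum_distrib_left mult_ac)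
qed

text \<open>Expanding |N f - \<Phi>|^2, where \<Phi> is the character expansion of f truncated to Xs
  and N = |G|, gives the defect in Bessel's inequality.\<close>
lemma bessel_identity:
  fixes f :: "'a \<Rightarrow> complex"
  assumes fin: "finite (carrier G)" and Xs: "Xs \<subseteq> characters G" "finite Xs"
  defines "a \<equiv> \<lambda>\<xi>. \<Sum>g\<in>carrier G. f g * cnj (\<xi> g)"
  shows "(\<Sum>g\<in>carrier G. (norm (of_nat (card (carrier G)) * f g - (\<Sum>\<xi>\<in>Xs. a \<xi> * \<xi> g)))\<^sup>2)
           = real (card (carrier G)) * (real (card (carrier G)) * (\<Sum>g\<in>carrier G. (norm (f g))\<^sup>2)
                                        - (\<Sum>\<xi>\<in>Xs. (norm (a \<xi>))\<^sup>2))"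
proof -
  define N :: complex where "N = of_nat (card (carrier G))"
  define \<Phi> where "\<Phi> = (\<lambda>g. \<Sum>\<xi>\<in>Xs. a \<xi> * \<xi> g)"
  define M where "M = (\<Sum>\<xi>\<in>Xs. (norm (a \<xi>))\<^sup>2)"
  define F where "F = (\<Sum>g\<in>carrier G. (norm (f g))\<^sup>2)"
  have f\<Phi>: "(\<Sum>g\<in>carrier G. f g * cnj (\<Phi> g)) = of_real M"
  proof -
    have "(\<Sum>g\<in>carrier G. f g * cnj (\<Phi> g))
        = (\<Sum>\<xi>\<in>Xs. cnj (a \<xi>) * (\<Sum>g\<in>carrier G. f g * cnj (\<xi> g)))"
      by (simp add: \<Phi>_def sum_distrib_left sum.swap[of _ "carrier G"] mult_ac)
    also have "\<dots> = (\<Sum>\<xi>\<in>Xs. a \<xi> * cnj (a \<xi>))" by (simp add: a_def mult.commute)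
    finally show ?thesis by (simp add: M_def sum_times_cnj)
  qed
  have \<Phi>f: "(\<Sum>g\<in>carrier G. \<Phi> g * cnj (f g)) = of_real M"
  proof -
    have "(\<Sum>g\<in>carrier G. \<Phi> g * cnj (f g)) = cnj (\<Sum>g\<in>carrier G. f g * cnj (\<Phi> g))"
      by (simp add: mult.commute)
    then show ?thesis by (simp add: f\<Phi>)
  qed
  have \<Phi>\<Phi>: "(\<Sum>g\<in>carrier G. \<Phi> g * cnj (\<Phi> g)) = N * of_real M"
    unfolding \<Phi>_def N_def M_def using char_combination_parseval[OF fin Xs, of a]
    by (simp add: sum_times_cnj)
  have ff: "(\<Sum>g\<in>carrier G. f g * cnj (f g)) = of_real F"
    by (simp add: F_def sum_times_cnj)
  define u where "u g = N * f g - \<Phi> g" for g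
  have "(\<Sum>g\<in>carrier G. u g * cnj (u g))
      = (\<Sum>g\<in>carrier G. N * N * (f g * cnj (f g)) - N * (f g * cnj (\<Phi> g))
                             - N * (\<Phi> g * cnj (f g)) + \<Phi> g * cnj (\<Phi> g))"
    by (rule sum.cong) (auto simp: u_def N_def algebra_simps)
  also have "\<dots> = N * N * of_real F - N * of_real M"
    by (simp add: sum.distrib sum_subtractf sum_distrib_left[symmetric] f\<Phi> \<Phi>f \<Phi>\<Phi> ff)
  finally have "of_real (\<Sum>g\<in>carrier G. (norm (u g))\<^sup>2)
      = (of_real (real (card (carrier G)) * (real (card (carrier G)) * F - M)) :: complex)"
    by (simp add: sum_times_cnj N_def algebra_simps)
  then have "(\<Sum>g\<in>carrier G. (norm (u g))\<^sup>2) = real (card (carrier G)) * (real (card (carrier G)) * F - M)"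
    using of_real_eq_iff by blast
  then show ?thesis by (simp only: u_def N_def \<Phi>_def M_def F_def)
qed

lemma bessel_inequality:
  fixes f :: "'a \<Rightarrow> complex"
  assumes fin: "finite (carrier G)" and Xs: "Xs \<subseteq> characters G" "finite Xs"
  shows "(\<Sum>\<xi>\<in>Xs. (norm (\<Sum>g\<in>carrier G. f g * cnj (\<xi> g)))\<^sup>2)
           \<le> real (card (carrier G)) * (\<Sum>g\<in>carrier G. (norm (f g))\<^sup>2)"
proof -
  have "card (carrier G) > 0" using fin by (auto simp: card_gt_0_iff)
  moreover have "0 \<le> real (card (carrier G)) * (real (card (carrier G)) * (\<Sum>g\<in>carrier G. (norm (f g))\<^sup>2)
                      - (\<Sum>\<xi>\<in>Xs. (norm (\<Sum>g\<in>carrier G. f g * cnj (\<xi> g)))\<^sup>2))"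
    unfolding bessel_identity[OF fin Xs, symmetric] by (simp add: sum_nonneg)
  ultimately show ?thesis by (simp add: zero_le_mult_iff)
qed

lemma bessel_indicator:
  assumes fin: "finite (carrier G)" and Xs: "Xs \<subseteq> characters G" "finite Xs" and A: "A \<subseteq> carrier G"
  shows "(\<Sum>\<xi>\<in>Xs. (norm (\<Sum>x\<in>A. \<xi> x))\<^sup>2) \<le> real (card (carrier G)) * real (card A)"
proof -
  let ?f = "\<lambda>g. if g \<in> A then 1 else 0 :: complex"
  have restrict: "(\<Sum>g\<in>carrier G. if g \<in> A then h g else 0) = (\<Sum>g\<in>A. h g)"
    for h :: "'a \<Rightarrow> 'c::comm_monoid_add"
    using sum.inter_restrict[OF fin, of h A] Int_absorb1[OF A] by simp
  have "(\<Sum>g\<in>carrier G. ?f g * cnj (\<xi> g)) = (\<Sum>g\<in>carrier G. if g \<in> A then cnj (\<xi> g) else 0)" for \<xi>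
    by (rule sum.cong) simp_all
  then have coeff: "(\<Sum>g\<in>carrier G. ?f g * cnj (\<xi> g)) = cnj (\<Sum>x\<in>A. \<xi> x)" for \<xi>
    by (simp only: restrict cnj_sum)
  have "(\<Sum>g\<in>carrier G. (norm (?f g))\<^sup>2) = (\<Sum>g\<in>carrier G. if g \<in> A then 1 else 0)"
    by (rule sum.cong) simp_all
  then have mass: "(\<Sum>g\<in>carrier G. (norm (?f g))\<^sup>2) = real (card A)"
    by (simp only: restrict) simp
  show ?thesis using bessel_inequality[OF fin Xs, of ?f] coeff mass by (simp del: cnj_sum)
qed


subsection \<open>Difference sets bound the shape parameter\<close>

lemma fourier_coeff_difference_count:
  assumes fin: "finite (carrier G)" and A: "A \<subseteq> carrier G" and t: "t \<in> carrier G"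
    and \<psi>: "\<psi> \<in> characters G"
  shows "fourier_coeff G (fibre_count (\<lambda>p. t \<otimes> fst p \<otimes> inv snd p) (A \<times> A)) \<psi>
           = cnj (\<psi> t) * (cnj (\<Sum>x\<in>A. \<psi> x) * (\<Sum>y\<in>A. \<psi> y))"
proof -
  have finA: "finite A" using A fin finite_subset by blast
  have "fourier_coeff G (fibre_count (\<lambda>p. t \<otimes> fst p \<otimes> inv snd p) (A \<times> A)) \<psi>
      = (\<Sum>p\<in>A \<times> A. \<psi> (inv (t \<otimes> fst p \<otimes> inv snd p)))"
    by (rule fourier_coeff_fibre_count) (use fin finA A t in \<open>auto simp: subset_iff\<close>)
  also have "\<dots> = (\<Sum>p\<in>A \<times> A. cnj (\<psi> t) * (cnj (\<psi> (fst p)) * \<psi> (snd p)))"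
  proof (rule sum.cong[OF refl])
    fix p assume "p \<in> A \<times> A"
    then have x: "fst p \<in> carrier G" and y: "snd p \<in> carrier G" using A by auto
    have "\<psi> (t \<otimes> fst p \<otimes> inv snd p) = \<psi> t * \<psi> (fst p) * cnj (\<psi> (snd p))"
      using char_mult[OF \<psi>] char_inv[OF \<psi> fin y] t x y by simp
    then show "\<psi> (inv (t \<otimes> fst p \<otimes> inv snd p)) = cnj (\<psi> t) * (cnj (\<psi> (fst p)) * \<psi> (snd p))"
      using char_inv[OF \<psi> fin] t x y by simp
  qed
  also have "\<dots> = cnj (\<psi> t) * (\<Sum>p\<in>A \<times> A. cnj (\<psi> (fst p)) * \<psi> (snd p))"
    by (simp add: sum_distrib_left)
  also have "(\<Sum>p\<in>A \<times> A. cnj (\<psi> (fst p)) * \<psi> (snd p)) = (\<Sum>x\<in>A. cnj (\<psi> x)) * (\<Sum>y\<in>A. \<psi> y)"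
    unfolding sum_product sum.cartesian_product by (simp add: case_prod_beta)
  finally show ?thesis by simp
qed

lemma norm_fourier_coeff_difference_count:
  assumes fin: "finite (carrier G)" and A: "A \<subseteq> carrier G" and t: "t \<in> carrier G"
    and \<psi>: "\<psi> \<in> characters G"
  shows "norm (fourier_coeff G (fibre_count (\<lambda>p. t \<otimes> fst p \<otimes> inv snd p) (A \<times> A)) \<psi>)
           = (norm (\<Sum>x\<in>A. \<psi> x))\<^sup>2"
  using char_norm[OF \<psi> fin t]
  by (simp add: fourier_coeff_difference_count[OF assms] norm_mult power2_eq_square del: cnj_sum)

lemma fourier_coeff_difference_count_trivial:
  assumes fin: "finite (carrier G)" and A: "A \<subseteq> carrier G" and t: "t \<in> carrier G"
  shows "fourier_coeff G (fibre_count (\<lambda>p. t \<otimes> fst p \<otimes> inv snd p) (A \<times> A)) (trivial_character G)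
           = of_nat (card A * card A)"
proof -
  have "(\<Sum>x\<in>A. trivial_character G x) = of_nat (card A)"
    using A by (simp add: trivial_character_def subset_iff)
  then show ?thesis
    using fourier_coeff_difference_count[OF fin A t trivial_character_in_characters] t
    by (simp add: trivial_character_def del: cnj_sum)
qed

lemma shape_param_le_difference_set:
  assumes fin: "finite (carrier G)" and A: "A \<subseteq> carrier G" "A \<noteq> {}" and t: "t \<in> carrier G"
    and diff: "\<And>x y. x \<in> A \<Longrightarrow> y \<in> A \<Longrightarrow> t \<otimes> x \<otimes> inv y \<in> S"
  shows "shape_param G S \<le> real (card S) / real (card A)"
proof -
  define c where "c = fibre_count (\<lambda>p. t \<otimes> fst p \<otimes> inv snd p) (A \<times> A)"
  have "card A > 0" using A fin by (meson card_gt_0_iff finite_subset)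
  have "card (carrier G) > 0" using fin by (auto simp: card_gt_0_iff)
  have supp: "c g = 0" if "g \<notin> S" for g
  proof -
    have "{p \<in> A \<times> A. t \<otimes> fst p \<otimes> inv snd p = g} = {}" using diff that by auto
    then show ?thesis by (simp only: c_def fibre_count_def card.empty of_nat_0)
  qed
  have triv: "cmod (fourier_coeff G c (trivial_character G)) = real (card A) * real (card A)"
    using fourier_coeff_difference_count_trivial[OF fin A(1) t] by (simp add: c_def norm_mult)
  then have nz: "fourier_coeff G c (trivial_character G) \<noteq> 0" using \<open>card A > 0\<close> by auto
  have "(\<Sum>\<psi>\<in>characters G. cmod (fourier_coeff G c \<psi>)) \<le> real (card (carrier G)) * real (card A)"
  proof (cases "finite (characters G)")
    case True
    then show ?thesis
      using bessel_indicator[OF fin subset_refl True A(1)]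
        norm_fourier_coeff_difference_count[OF fin A(1) t]
      by (simp add: c_def)
  qed simp
  then have ratio: "(\<Sum>\<psi>\<in>characters G. cmod (fourier_coeff G c \<psi>))
                      / cmod (fourier_coeff G c (trivial_character G))
                    \<le> real (card (carrier G)) / real (card A)"
    using \<open>card A > 0\<close> by (simp add: triv field_simps)
  have "shape_param G S \<le> real (card S) / real (card (carrier G)) *
           ((\<Sum>\<psi>\<in>characters G. cmod (fourier_coeff G c \<psi>))
              / cmod (fourier_coeff G c (trivial_character G)))"
    by (rule shape_param_le_witness[OF supp nz])
  also have "\<dots> \<le> real (card S) / real (card (carrier G)) * (real (card (carrier G)) / real (card A))"
    by (rule mult_left_mono[OF ratio]) simp
  also have "\<dots> = real (card S) / real (card A)" using \<open>card (carrier G) > 0\<close> by simp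
  finally show ?thesis .
qed

end


subsection \<open>Intervals contain large difference sets\<close>

lemma Z_interval_range:
  assumes "Z_interval J"
  obtains p q where "p \<le> q" "J = {p..q}"
proof -
  obtain a b :: real where ne: "J \<noteq> {}" and J: "J = {k. a \<le> of_int k \<and> of_int k \<le> b}"
    using assms unfolding Z_interval_def by blast
  have range: "J = {\<lceil>a\<rceil>..\<lfloor>b\<rfloor>}" by (auto simp: J ceiling_le_iff le_floor_iff)
  with ne have "\<lceil>a\<rceil> \<le> \<lfloor>b\<rfloor>" by simp
  then show ?thesis using range by (rule that)
qed

definition residue_arc :: "nat \<Rightarrow> int \<Rightarrow> int \<Rightarrow> int set" where
  "residue_arc n a b = (\<lambda>k. k mod int n) ` {a..b}"

lemma residue_arc_mono: "a' \<le> a \<Longrightarrow> b \<le> b' \<Longrightarrow> residue_arc n a b \<subseteq> residue_arc n a' b'"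
  unfolding residue_arc_def by (rule image_mono) auto

lemma residue_arc_split: "residue_arc n a c \<subseteq> residue_arc n a b \<union> residue_arc n (b + 1) c"
  unfolding residue_arc_def image_Un[symmetric] by (rule image_mono) auto

locale residue_projection = group K for K :: "('a, 'b) monoid_scheme" (structure) +
  fixes n :: nat and \<pi> :: "'a \<Rightarrow> int"
  assumes n_pos: "n \<ge> 1"
    and hom: "\<pi> \<in> hom K (integer_mod_group n)"
    and onto: "\<pi> ` carrier K = carrier (integer_mod_group n)"
begin

lemma proj_mult: "x \<in> carrier K \<Longrightarrow> y \<in> carrier K \<Longrightarrow> \<pi> (x \<otimes> y) = (\<pi> x + \<pi> y) mod int n"
  using hom_mult[OF hom] by simp

lemma proj_inv:
  assumes "x \<in> carrier K"
  shows "\<pi> (inv x) = (- \<pi> x) mod int n"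
proof -
  interpret group_hom K "integer_mod_group n" \<pi>
    by (simp add: group_hom_def group_hom_axioms_def hom)
  show ?thesis using assms by simp
qed

lemma proj_onto: "\<exists>x \<in> carrier K. \<pi> x = k mod int n"
proof -
  have "k mod int n \<in> carrier (integer_mod_group n)"
    using n_pos by (simp add: carrier_integer_mod_group)
  then show ?thesis using onto by (metis imageE)
qed

lemma preimage_arc_translate:
  assumes s: "s \<in> carrier K" "\<pi> s = e mod int n"
  shows "{x \<in> carrier K. \<pi> x \<in> residue_arc n (e + a) (e + b)}
           \<subseteq> (\<lambda>w. s \<otimes> w) ` {x \<in> carrier K. \<pi> x \<in> residue_arc n a b}"
proof
  fix x assume "x \<in> {x \<in> carrier K. \<pi> x \<in> residue_arc n (e + a) (e + b)}"
  then obtain k where x: "x \<in> carrier K" and k: "e + a \<le> k" "k \<le> e + b" and px: "\<pi> x = k mod int n"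
    by (auto simp: residue_arc_def)
  define w where "w = inv s \<otimes> x"
  have w: "w \<in> carrier K" and sw: "s \<otimes> w = x"
    using s(1) x by (simp_all add: w_def m_assoc[symmetric])
  have "\<pi> w = (k - e) mod int n"
    using s x by (simp add: w_def proj_mult proj_inv px mod_simps)
  then have "\<pi> w \<in> residue_arc n a b"
    using k unfolding residue_arc_def by (intro image_eqI[of _ _ "k - e"]) auto
  then show "x \<in> (\<lambda>w. s \<otimes> w) ` {x \<in> carrier K. \<pi> x \<in> residue_arc n a b}"
    using w sw by blast
qed

lemma preimage_arc_difference:
  assumes t: "t \<in> carrier K" "\<pi> t = e mod int n"
    and x: "x \<in> carrier K" "\<pi> x \<in> residue_arc n 0 d"
    and y: "y \<in> carrier K" "\<pi> y \<in> residue_arc n 0 d"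
  shows "\<pi> (t \<otimes> x \<otimes> inv y) \<in> residue_arc n (e - d) (e + d)"
proof -
  obtain i j where ij: "i \<in> {0..d}" "j \<in> {0..d}" and "\<pi> x = i mod int n" "\<pi> y = j mod int n"
    using x(2) y(2) by (auto simp: residue_arc_def)
  then have "\<pi> (t \<otimes> x \<otimes> inv y) = (e + i - j) mod int n"
    using t x y by (simp add: proj_mult proj_inv mod_simps)
  then show ?thesis
    using ij unfolding residue_arc_def by (intro image_eqI[of _ _ "e + i - j"]) auto
qed

text \<open>An arc of length at most 2(d + 1) is covered by two translates of the arc [0, d].\<close>
lemma card_preimage_arc_le:
  assumes fin: "finite (carrier K)" and q: "q \<le> p + 2 * d + 1"
  shows "card {x \<in> carrier K. \<pi> x \<in> residue_arc n p q}
           \<le> 2 * card {x \<in> carrier K. \<pi> x \<in> residue_arc n 0 d}"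
    (is "card ?S \<le> 2 * card ?A")
proof -
  obtain s1 where s1: "s1 \<in> carrier K" "\<pi> s1 = p mod int n" using proj_onto by blast
  obtain s2 where s2: "s2 \<in> carrier K" "\<pi> s2 = (p + d + 1) mod int n" using proj_onto by blast
  have "residue_arc n p q
          \<subseteq> residue_arc n (p + 0) (p + d) \<union> residue_arc n (p + d + 1 + 0) (p + d + 1 + d)"
    using residue_arc_split[of n p q "p + d"] residue_arc_mono[of "p + d + 1" "p + d + 1" q "p + d + 1 + d" n] q
    by auto
  then have cover: "?S \<subseteq> (\<lambda>w. s1 \<otimes> w) ` ?A \<union> (\<lambda>w. s2 \<otimes> w) ` ?A"
    using preimage_arc_translate[OF s1, of 0 d] preimage_arc_translate[OF s2, of 0 d] by blast
  have finA: "finite ?A" using fin by simp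
  have "card ?S \<le> card ((\<lambda>w. s1 \<otimes> w) ` ?A \<union> (\<lambda>w. s2 \<otimes> w) ` ?A)"
    using finA cover by (intro card_mono) auto
  also have "\<dots> \<le> card ((\<lambda>w. s1 \<otimes> w) ` ?A) + card ((\<lambda>w. s2 \<otimes> w) ` ?A)"
    by (rule card_Un_le)
  also have "\<dots> \<le> card ?A + card ?A" by (intro add_mono card_image_le finA)
  finally show ?thesis by simp
qed

lemma preimage_arc_difference_set:
  assumes fin: "finite (carrier K)" and pq: "p \<le> q"
  defines "S \<equiv> {x \<in> carrier K. \<pi> x \<in> residue_arc n p q}"
  obtains A t where "A \<subseteq> carrier K" "A \<noteq> {}" "t \<in> carrier K"
    "\<And>x y. x \<in> A \<Longrightarrow> y \<in> A \<Longrightarrow> t \<otimes> x \<otimes> inv y \<in> S" "card S \<le> 2 * card A"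
proof -
  define d where "d = (q - p) div 2"
  have d: "0 \<le> d" "p + 2 * d \<le> q" "q \<le> p + 2 * d + 1" using pq by (simp_all add: d_def)
  define A where "A = {x \<in> carrier K. \<pi> x \<in> residue_arc n 0 d}"
  have A_sub: "A \<subseteq> carrier K" by (auto simp: A_def)
  obtain a where "a \<in> carrier K" "\<pi> a = 0 mod int n" using proj_onto by blast
  then have "a \<in> A" using d(1) unfolding A_def residue_arc_def by (auto intro: image_eqI[of _ _ 0])
  obtain t where t: "t \<in> carrier K" "\<pi> t = (p + d) mod int n" using proj_onto by blast
  have "t \<otimes> x \<otimes> inv y \<in> S" if "x \<in> A" "y \<in> A" for x y
  proof -
    have x: "x \<in> carrier K" "\<pi> x \<in> residue_arc n 0 d"
      and y: "y \<in> carrier K" "\<pi> y \<in> residue_arc n 0 d"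
      using that by (simp_all add: A_def)
    have "\<pi> (t \<otimes> x \<otimes> inv y) \<in> residue_arc n (p + d - d) (p + d + d)"
      by (rule preimage_arc_difference[OF t x y])
    also have "\<dots> \<subseteq> residue_arc n p q" using d by (intro residue_arc_mono) auto
    finally show ?thesis using t(1) x(1) y(1) by (simp add: S_def)
  qed
  moreover have "card S \<le> 2 * card A"
    unfolding S_def A_def by (rule card_preimage_arc_le[OF fin d(3)])
  ultimately show ?thesis using that A_sub \<open>a \<in> A\<close> t(1) by blast
qed

end

lemma group_interval_difference_set:
  assumes G: "group G" and fin: "finite (carrier G)" and S: "group_interval G S"
  obtains A t where "A \<subseteq> carrier G" "A \<noteq> {}" "t \<in> carrier G"
    "\<And>x y. x \<in> A \<Longrightarrow> y \<in> A \<Longrightarrow> t \<otimes>\<^bsub>G\<^esub> x \<otimes>\<^bsub>G\<^esub> inv\<^bsub>G\<^esub> y \<in> S"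
    "card S \<le> 2 * card A"
proof -
  obtain H n \<pi> T where H: "subgroup H G" and n: "n \<ge> 1"
    and hom: "\<pi> \<in> hom (G\<lparr>carrier := H\<rparr>) (integer_mod_group n)"
    and onto: "\<pi> ` H = carrier (integer_mod_group n)"
    and T: "ZnZ_std_interval n T" and S_eq: "S = {x \<in> H. \<pi> x \<in> T}"
    using S unfolding group_interval_def full_interval_def by auto
  obtain J where J: "Z_interval J" and T_eq: "T = (\<lambda>k. k mod int n) ` J"
    using T unfolding ZnZ_std_interval_def by blast
  obtain p q where pq: "p \<le> q" and J_eq: "J = {p..q}" using Z_interval_range[OF J] .
  interpret K: residue_projection "G\<lparr>carrier := H\<rparr>" n \<pi>
    using group.subgroup_imp_group[OF G H] n hom onto
    by (simp add: residue_projection_def residue_projection_axioms_def)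
  have HG: "H \<subseteq> carrier G" using H by (rule subgroup.subset)
  have S_arc: "S = {x \<in> carrier (G\<lparr>carrier := H\<rparr>). \<pi> x \<in> residue_arc n p q}"
    by (simp add: S_eq T_eq J_eq residue_arc_def)
  have finH: "finite (carrier (G\<lparr>carrier := H\<rparr>))" using fin HG finite_subset by auto
  (* Transfer the difference set from the subgroup to G: products and inverses agree. *)
  show thesis
  proof (rule K.preimage_arc_difference_set[OF finH pq])
    fix A t assume "A \<subseteq> carrier (G\<lparr>carrier := H\<rparr>)" "A \<noteq> {}" "t \<in> carrier (G\<lparr>carrier := H\<rparr>)"
      and "\<And>x y. x \<in> A \<Longrightarrow> y \<in> A \<Longrightarrow>
             t \<otimes>\<^bsub>G\<lparr>carrier := H\<rparr>\<^esub> x \<otimes>\<^bsub>G\<lparr>carrier := H\<rparr>\<^esub> inv\<^bsub>G\<lparr>carrier := H\<rparr>\<^esub> y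
               \<in> {x \<in> carrier (G\<lparr>carrier := H\<rparr>). \<pi> x \<in> residue_arc n p q}"
      and "card {x \<in> carrier (G\<lparr>carrier := H\<rparr>). \<pi> x \<in> residue_arc n p q} \<le> 2 * card A"
    then show thesis
      using that[of A t] group.m_inv_consistent[OF G H] S_arc HG by (auto simp: subset_iff)
  qed
qed


theorem lemma3p5:
  fixes G :: "('a, 'b) monoid_scheme" and S :: "'a set"
  assumes "comm_group G" and "finite (carrier G)" and "group_interval G S"
  shows "shape_param G S \<le> 2"
proof -
  have G: "group G" using assms(1) by (simp add: comm_group_def)
  obtain A t where A: "A \<subseteq> carrier G" "A \<noteq> {}" and t: "t \<in> carrier G"
    and diff: "\<And>x y. x \<in> A \<Longrightarrow> y \<in> A \<Longrightarrow> t \<otimes>\<^bsub>G\<^esub> x \<otimes>\<^bsub>G\<^esub> inv\<^bsub>G\<^esub> y \<in> S"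
    and card: "card S \<le> 2 * card A"
    using group_interval_difference_set[OF G assms(2,3)] by blast
  have "shape_param G S \<le> real (card S) / real (card A)"
    using group.shape_param_le_difference_set[OF G assms(2) A t diff] .
  also have "\<dots> \<le> 2"
    using card A assms(2) by (simp add: divide_le_eq card_gt_0_iff finite_subset)
  finally show ?thesis .
qed

end
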